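(* Consider any algorithm in $\mathcal{A}$ run over either the nearest-neighbor graph $\mathcal{G}^\mu_{x(k)}$ or the nearest-value graph $\mathcal{G}^{\mu v}_{x(k)}$ (for some positive integer $\mu$). For any two nodes $u,v\in\mathcal{V}$ and any time $k$: (i) if $x_u(k)=x_v(k)$ then $x_u(k+1)=x_v(k+1)$; (ii) if $x_u(k)<x_v(k)$ then $x_u(k+1)\le x_v(k+1)$.
   Context: Nodes $\mathcal{V}=\{1,\dots,n\}$, $n\ge3$, states $x_i(k)\in\mathbb{R}$, discrete time. The algorithm class $\mathcal{A}$: each node updates $$x_i(k+1)=\eta_k x_i(k)+\alpha_k\min_{j\in\mathcal{N}_i(k)}x_j(k)+(1-\eta_k-\alpha_k)\max_{j\in\mathcal{N}_i(k)}x_j(k),$$ with node-independent parameters $\eta_k\in[0,1]$, $\alpha_k\in[0,1-\eta_k]$; here $\mathcal{N}_i(k)=\{i\}\cup\mathcal{N}_i^-(k)\cup\mathcal{N}_i^+(k)$. Nearest-neighbor graph $\mathcal{G}^\mu_{x(k)}$: $\mathcal{N}_i^-(k)$ is a set of $\min(\mu,|\{j:x_j(k)<x_i(k)\}|)$ nodes $j$ with $x_j(k)<x_i(k)$ whose values are closest to $x_i(k)$ among such nodes (ties broken arbitrarily), and $\mathcal{N}_i^+(k)$ is defined symmetrically from $\{j: x_j(k)>x_i(k)\}$. Nearest-value graph $\mathcal{G}^{\mu v}_{x(k)}$: $\mathcal{N}_i^-(k)$ is a set of nodes $j$ with $x_j(k)<x_i(k)$ having pairwise distinct values, these values being exactly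 the $\mu$ largest distinct values smaller than $x_i(k)$ (all such distinct values if there are fewer than $\mu$); $\mathcal{N}_i^+(k)$ is defined symmetrically using the $\mu$ smallest distinct values larger than $x_i(k)$. *)

theory Defs
  imports Complex_Main
begin

text \<open>Node set V = {1..n}; a state is a function x :: nat => real on node labels.
  Neighbour sets are given as functions Nm, Np :: nat => nat set (lower / upper neighbours).\<close>

definition lower_nodes :: "nat set \<Rightarrow> (nat \<Rightarrow> real) \<Rightarrow> nat \<Rightarrow> nat set" where
  "lower_nodes V x i = {j \<in> V. x j < x i}"

definition upper_nodes :: "nat set \<Rightarrow> (nat \<Rightarrow> real) \<Rightarrow> nat \<Rightarrow> nat set" where
  "upper_nodes V x i = {j \<in> V. x j > x i}"

text \<open>Nearest-neighbour graph G^mu_x: Nm i / Np i are valid choices (ties arbitrary).\<close>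
definition nn_graph :: "nat \<Rightarrow> nat set \<Rightarrow> (nat \<Rightarrow> real) \<Rightarrow> (nat \<Rightarrow> nat set) \<Rightarrow> (nat \<Rightarrow> nat set) \<Rightarrow> bool" where
  "nn_graph \<mu> V x Nm Np \<longleftrightarrow> (\<forall>i\<in>V.
     Nm i \<subseteq> lower_nodes V x i \<and> card (Nm i) = min \<mu> (card (lower_nodes V x i)) \<and>
     (\<forall>j\<in>Nm i. \<forall>j'\<in>lower_nodes V x i - Nm i. x j' \<le> x j) \<and>
     Np i \<subseteq> upper_nodes V x i \<and> card (Np i) = min \<mu> (card (upper_nodes V x i)) \<and>
     (\<forall>j\<in>Np i. \<forall>j'\<in>upper_nodes V x i - Np i. x j \<le> x j'))"

definition nv_graph :: "nat \<Rightarrow> nat set \<Rightarrow> (nat \<Rightarrow> real) \<Rightarrow> (nat \<Rightarrow> nat set) \<Rightarrow> (nat \<Rightarrow> nat set) \<Rightarrow> bool" where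
  "nv_graph \<mu> V x Nm Np \<longleftrightarrow> (\<forall>i\<in>V.
     Nm i \<subseteq> lower_nodes V x i \<and> inj_on x (Nm i) \<and>
     card (x ` Nm i) = min \<mu> (card (x ` lower_nodes V x i)) \<and>
     (\<forall>w\<in>x ` Nm i. \<forall>w'\<in>x ` lower_nodes V x i - x ` Nm i. w' < w) \<and>
     Np i \<subseteq> upper_nodes V x i \<and> inj_on x (Np i) \<and>
     card (x ` Np i) = min \<mu> (card (x ` upper_nodes V x i)) \<and>
     (\<forall>w\<in>x ` Np i. \<forall>w'\<in>x ` upper_nodes V x i - x ` Np i. w < w'))"

definition nbhd :: "(nat \<Rightarrow> nat set) \<Rightarrow> (nat \<Rightarrow> nat set) \<Rightarrow> nat \<Rightarrow> nat set" where
  "nbhd Nm Np i = {i} \<union> Nm i \<union> Np i"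

definition alg_step :: "nat set \<Rightarrow> real \<Rightarrow> real \<Rightarrow> (nat \<Rightarrow> real) \<Rightarrow> (nat \<Rightarrow> nat set) \<Rightarrow> (nat \<Rightarrow> nat set) \<Rightarrow> (nat \<Rightarrow> real) \<Rightarrow> bool" where
  "alg_step V \<eta> \<alpha> x Nm Np x' \<longleftrightarrow> (\<forall>i\<in>V.
     x' i = \<eta> * x i + \<alpha> * Min (x ` nbhd Nm Np i) + (1 - \<eta> - \<alpha>) * Max (x ` nbhd Nm Np i))"

end

theory Submission
  imports Defs
begin

(*
  The heart of the argument is a monotonicity property of "top-mu selections":
  if A picks the mu best elements of L, A' the mu best elements of a larger set
  L' \<supseteq> L, and j \<in> A' also lies in L, then some element of A is no better than j.
  Both graph constructions make the lower neighbourhood N_i^- a top-mu selection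
  (of nodes ordered by value, resp. of distinct values), and the lower
  neighbourhoods grow with x_i.  Hence x_u \<le> x_v forces the minimum over N_u to
  be at most the minimum over N_v.  Negating all values swaps lower and upper
  neighbourhoods, which yields the corresponding statement for maxima.  Since
  the update is a convex combination of x_i, the neighbourhood minimum and the
  neighbourhood maximum, it is then monotone in x_i, which gives both claims.
*)

definition top_selection :: "nat \<Rightarrow> ('a \<Rightarrow> real) \<Rightarrow> 'a set \<Rightarrow> 'a set \<Rightarrow> bool" where
  "top_selection \<mu> f L A \<longleftrightarrow>
     A \<subseteq> L \<and> card A = min \<mu> (card L) \<and> (\<forall>a\<in>A. \<forall>b\<in>L - A. f b \<le> f a)"

lemma top_selection_mono:
  assumes fin: "finite L'" and sub: "L \<subseteq> L'"
    and sel: "top_selection \<mu> f L A" and sel': "top_selection \<mu> f L' A'"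
    and j: "j \<in> A'" "j \<in> L"
  shows "\<exists>a\<in>A. f a \<le> f j"
proof (rule ccontr)
  assume "\<not> ?thesis"
  hence above: "\<forall>a\<in>A. f j < f a" by auto
  have finL: "finite L" using fin sub finite_subset by blast
  have "j \<notin> A" using above by auto
  with sel j have "A \<subset> L" unfolding top_selection_def by blast
  hence "card A < card L" using finL psubset_card_mono by blast
  hence cardA: "card A = \<mu>" using sel unfolding top_selection_def by linarith
  have "A \<subseteq> A'"
  proof
    fix a assume a: "a \<in> A"
    show "a \<in> A'"
    proof (rule ccontr)
      assume "a \<notin> A'"
      hence "f a \<le> f j" using sel sel' j a sub unfolding top_selection_def by blast
      thus False using above a by force
    qed
  qed
  with j have "insert j A \<subseteq> A'" by blast
  moreover have "finite A'" using sel' fin finite_subset unfolding top_selection_def by blast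
  ultimately have "card (insert j A) \<le> card A'" by (rule card_mono[rotated])
  moreover have "finite A" using \<open>A \<subset> L\<close> finL finite_subset by blast
  ultimately have "\<mu> + 1 \<le> card A'" using \<open>j \<notin> A\<close> cardA by simp
  thus False using sel' unfolding top_selection_def by linarith
qed

lemma lower_nodes_mono: "x u \<le> x v \<Longrightarrow> lower_nodes V x u \<subseteq> lower_nodes V x v"
  unfolding lower_nodes_def by auto

lemma finite_lower_nodes: "finite V \<Longrightarrow> finite (lower_nodes V x i)"
  unfolding lower_nodes_def by simp

lemma nn_graph_top_selection:
  "nn_graph \<mu> V x Nm Np \<Longrightarrow> i \<in> V \<Longrightarrow> top_selection \<mu> x (lower_nodes V x i) (Nm i)"
  unfolding nn_graph_def top_selection_def by blast

lemma nv_graph_top_selection: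
  "nv_graph \<mu> V x Nm Np \<Longrightarrow> i \<in> V \<Longrightarrow> top_selection \<mu> id (x ` lower_nodes V x i) (x ` Nm i)"
  unfolding nv_graph_def top_selection_def by (fastforce intro: less_imp_le)

lemma graph_nbrs_subset:
  assumes "nn_graph \<mu> V x Nm Np \<or> nv_graph \<mu> V x Nm Np" and "i \<in> V"
  shows "Nm i \<subseteq> lower_nodes V x i" "Np i \<subseteq> upper_nodes V x i"
  using assms unfolding nn_graph_def nv_graph_def by blast+

lemma lower_nbr_dominated:
  assumes G: "nn_graph \<mu> V x Nm Np \<or> nv_graph \<mu> V x Nm Np" and finV: "finite V"
    and u: "u \<in> V" and v: "v \<in> V" and le: "x u \<le> x v"
    and j: "j \<in> Nm v" and ju: "x j < x u"
  shows "\<exists>a\<in>Nm u. x a \<le> x j"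
proof -
  have jL: "j \<in> lower_nodes V x u"
    using graph_nbrs_subset(1)[OF G v] j ju unfolding lower_nodes_def by auto
  note L_mono = lower_nodes_mono[OF le, of V] and finL = finite_lower_nodes[OF finV]
  from G show ?thesis
  proof
    assume "nn_graph \<mu> V x Nm Np"
    from top_selection_mono[OF finL L_mono nn_graph_top_selection[OF this u]
        nn_graph_top_selection[OF this v] j jL]
    show ?thesis .
  next
    assume "nv_graph \<mu> V x Nm Np"
    from top_selection_mono[OF finite_imageI[OF finL] image_mono[OF L_mono]
        nv_graph_top_selection[OF this u] nv_graph_top_selection[OF this v]] j jL
    show ?thesis by auto
  qed
qed

lemma finite_nbhd:
  assumes "nn_graph \<mu> V x Nm Np \<or> nv_graph \<mu> V x Nm Np" and "finite V" and "i \<in> V"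
  shows "finite (nbhd Nm Np i)"
proof -
  have "nbhd Nm Np i \<subseteq> V"
    using graph_nbrs_subset[OF assms(1,3)] assms(3)
    unfolding nbhd_def lower_nodes_def upper_nodes_def by blast
  thus ?thesis using assms(2) finite_subset by blast
qed

lemma nbhd_Min_mono:
  fixes x :: "nat \<Rightarrow> real"
  assumes G: "nn_graph \<mu> V x Nm Np \<or> nv_graph \<mu> V x Nm Np" and finV: "finite V"
    and u: "u \<in> V" and v: "v \<in> V" and le: "x u \<le> x v"
  shows "Min (x ` nbhd Nm Np u) \<le> Min (x ` nbhd Nm Np v)"
proof -
  have min_le: "Min (x ` nbhd Nm Np u) \<le> x a" if "a \<in> nbhd Nm Np u" for a
    using finite_nbhd[OF G finV u] that by simp
  obtain j where jN: "j \<in> nbhd Nm Np v" and jmin: "Min (x ` nbhd Nm Np v) = x j"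
    using Min_in[of "x ` nbhd Nm Np v"] finite_nbhd[OF G finV v] unfolding nbhd_def by auto
  show ?thesis
  proof (cases "x u \<le> x j")
    case True
    thus ?thesis using min_le[of u] jmin unfolding nbhd_def by auto
  next
    case False
    hence "j \<notin> {v} \<union> Np v"
      using le graph_nbrs_subset(2)[OF G v] unfolding upper_nodes_def by auto
    hence "j \<in> Nm v" using jN unfolding nbhd_def by blast
    then obtain a where "a \<in> Nm u" "x a \<le> x j"
      using lower_nbr_dominated[OF G finV u v le] False by force
    thus ?thesis using min_le[of a] jmin unfolding nbhd_def by auto
  qed
qed

lemma nn_graph_uminus:
  "nn_graph \<mu> V x Nm Np \<Longrightarrow> nn_graph \<mu> V (\<lambda>i. - x i) Np Nm"
  unfolding nn_graph_def lower_nodes_def upper_nodes_def by auto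

lemma nv_graph_uminus:
  assumes "nv_graph \<mu> V x Nm Np"
  shows "nv_graph \<mu> V (\<lambda>i. - x i) Np Nm"
proof -
  have img: "(\<lambda>i. - x i) ` A = uminus ` (x ` A)" for A by auto
  have card_neg: "card ((\<lambda>i. - x i) ` A) = card (x ` A)" for A
    unfolding img by (simp add: card_image)
  have diff_neg: "(\<lambda>i. - x i) ` A - (\<lambda>i. - x i) ` B = uminus ` (x ` A - x ` B)" for A B
    unfolding img by (simp add: image_set_diff)
  have inj_neg: "inj_on (\<lambda>i. - x i) A = inj_on x A" for A
    unfolding inj_on_def by simp
  have "lower_nodes V (\<lambda>i. - x i) = upper_nodes V x"
       "upper_nodes V (\<lambda>i. - x i) = lower_nodes V x"
    unfolding lower_nodes_def upper_nodes_def by auto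
  with assms show ?thesis
    unfolding nv_graph_def card_neg inj_neg diff_neg by (auto simp: img)
qed

lemma nbhd_swap: "nbhd Np Nm i = nbhd Nm Np i"
  unfolding nbhd_def by blast

lemma nbhd_Max_mono:
  fixes x :: "nat \<Rightarrow> real"
  assumes G: "nn_graph \<mu> V x Nm Np \<or> nv_graph \<mu> V x Nm Np" and finV: "finite V"
    and u: "u \<in> V" and v: "v \<in> V" and le: "x u \<le> x v"
  shows "Max (x ` nbhd Nm Np u) \<le> Max (x ` nbhd Nm Np v)"
proof -
  have G': "nn_graph \<mu> V (\<lambda>i. - x i) Np Nm \<or> nv_graph \<mu> V (\<lambda>i. - x i) Np Nm"
    using G nn_graph_uminus nv_graph_uminus by blast
  have neg_Max: "Min ((\<lambda>i. - x i) ` nbhd Np Nm i) = - Max (x ` nbhd Nm Np i)" if "i \<in> V" for i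
    using finite_nbhd[OF G finV that]
    by (simp add: nbhd_swap image_image nbhd_def)
  have "Min ((\<lambda>i. - x i) ` nbhd Np Nm v) \<le> Min ((\<lambda>i. - x i) ` nbhd Np Nm u)"
    using nbhd_Min_mono[OF G' finV v u] le by simp
  thus ?thesis using neg_Max[OF u] neg_Max[OF v] by simp
qed

lemma alg_step_mono:
  assumes step: "alg_step V \<eta> \<alpha> x Nm Np x'"
    and w: "0 \<le> \<eta>" "0 \<le> \<alpha>" "\<alpha> \<le> 1 - \<eta>"
    and u: "u \<in> V" and v: "v \<in> V" and le: "x u \<le> x v"
    and min_le: "Min (x ` nbhd Nm Np u) \<le> Min (x ` nbhd Nm Np v)"
    and max_le: "Max (x ` nbhd Nm Np u) \<le> Max (x ` nbhd Nm Np v)"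
  shows "x' u \<le> x' v"
proof -
  have "\<eta> * x u \<le> \<eta> * x v" using w(1) le by (rule mult_left_mono[rotated])
  moreover have "\<alpha> * Min (x ` nbhd Nm Np u) \<le> \<alpha> * Min (x ` nbhd Nm Np v)"
    using w(2) min_le by (rule mult_left_mono[rotated])
  moreover have "(1 - \<eta> - \<alpha>) * Max (x ` nbhd Nm Np u) \<le> (1 - \<eta> - \<alpha>) * Max (x ` nbhd Nm Np v)"
    using w(3) max_le by (intro mult_left_mono) auto
  ultimately show ?thesis using step u v unfolding alg_step_def by auto
qed

theorem lemma2:
  fixes n \<mu> :: nat
    and x :: "nat \<Rightarrow> nat \<Rightarrow> real"
    and \<eta> \<alpha> :: "nat \<Rightarrow> real"
    and Nm Np :: "nat \<Rightarrow> nat \<Rightarrow> nat set"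
  assumes "n \<ge> 3"
    and "\<mu> > 0"
    and "\<And>k. 0 \<le> \<eta> k \<and> \<eta> k \<le> 1"
    and "\<And>k. 0 \<le> \<alpha> k \<and> \<alpha> k \<le> 1 - \<eta> k"
    and "(\<forall>k. nn_graph \<mu> {1..n} (x k) (Nm k) (Np k)) \<or>
         (\<forall>k. nv_graph \<mu> {1..n} (x k) (Nm k) (Np k))"
    and "\<And>k. alg_step {1..n} (\<eta> k) (\<alpha> k) (x k) (Nm k) (Np k) (x (Suc k))"
    and "u \<in> {1..n}" and "v \<in> {1..n}"
  shows "(x k u = x k v \<longrightarrow> x (Suc k) u = x (Suc k) v) \<and>
         (x k u < x k v \<longrightarrow> x (Suc k) u \<le> x (Suc k) v)"
proof -
  have G: "nn_graph \<mu> {1..n} (x k) (Nm k) (Np k) \<or> nv_graph \<mu> {1..n} (x k) (Nm k) (Np k)"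
    using assms(5) by blast
  have order_preserved: "x (Suc k) a \<le> x (Suc k) b"
    if a: "a \<in> {1..n}" and b: "b \<in> {1..n}" and le: "x k a \<le> x k b" for a b
    using alg_step_mono[OF assms(6)[of k] _ _ _ a b le
        nbhd_Min_mono[OF G _ a b le] nbhd_Max_mono[OF G _ a b le]] assms(3,4)[of k]
    by simp
  show ?thesis using order_preserved[of u v] order_preserved[of v u] assms(7,8) by auto
qed

end
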